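(* Let $0<\phi<\pi/6$, $\nu>0$. For $F,G\in\mathcal A_\phi$ and every integer $j\ge0$, $$|(p^jF)*G(p,t)|\le\frac{|p|^je^{\nu|p|}}{M_0(1+|p|^2)}\|F\|_\nu\|G\|_\nu\qquad\text{for all }(p,t)\in\overline{\mathcal S_\phi}\times[0,T].$$
   Context: $T>0$; $\mathcal S_\phi=\{p:\arg p\in(-\phi,\phi),0<|p|<\infty\}$, $\mathcal K=\overline{\mathcal S_\phi}\times[0,T]$; $\|G\|_\nu=M_0\sup_{(p,t)\in\mathcal K}(1+|p|^2)e^{-\nu|p|}|G(p,t)|$ with $M_0=\sup_{s\ge0}\frac{2(1+s^2)(\ln(1+s^2)+s\arctan s)}{s(s^2+4)}$. $\mathcal A_\phi$ is the space of functions $F(p,t)$ analytic in $p\in\mathcal S_\phi$, continuous on $\overline{\mathcal S_\phi}$ for each $t\in[0,T]$, with $\|F\|_\nu<\infty$. Convolution: $(F*G)(p,t)=\int_0^pF(s,t)G(p-s,t)\,ds$ along the segment $[0,p]$; $(p^jF)$ denotes the function $(p,t)\mapsto p^jF(p,t)$. *)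

theory Defs
  imports "HOL-Complex_Analysis.Complex_Analysis"
begin

definition sector :: "real \<Rightarrow> complex set" where
  "sector \<phi> = {p. p \<noteq> 0 \<and> -\<phi> < Arg p \<and> Arg p < \<phi>}"

definition M0 :: real where
  "M0 = (SUP s\<in>{0::real..}. 2 * (1 + s^2) * (ln (1 + s^2) + s * arctan s) / (s * (s^2 + 4)))"

definition wnorm :: "real \<Rightarrow> real \<Rightarrow> real \<Rightarrow> (complex \<Rightarrow> real \<Rightarrow> complex) \<Rightarrow> real" where
  "wnorm \<phi> T \<nu> G = M0 * (SUP pt\<in>closure (sector \<phi>) \<times> {0..T}.
      (1 + (cmod (fst pt))^2) * exp (-\<nu> * cmod (fst pt)) * cmod (G (fst pt) (snd pt)))"

definition Aspace :: "real \<Rightarrow> real \<Rightarrow> real \<Rightarrow> (complex \<Rightarrow> real \<Rightarrow> complex) set" where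
  "Aspace \<phi> T \<nu> = {F. (\<forall>t\<in>{0..T}. (\<lambda>p. F p t) holomorphic_on sector \<phi> \<and>
                        continuous_on (closure (sector \<phi>)) (\<lambda>p. F p t)) \<and>
      bdd_above ((\<lambda>pt. (1 + (cmod (fst pt))^2) * exp (-\<nu> * cmod (fst pt)) * cmod (F (fst pt) (snd pt)))
                   ` (closure (sector \<phi>) \<times> {0..T}))}"

definition conv :: "(complex \<Rightarrow> real \<Rightarrow> complex) \<Rightarrow> (complex \<Rightarrow> real \<Rightarrow> complex) \<Rightarrow> complex \<Rightarrow> real \<Rightarrow> complex" where
  "conv F G p t = contour_integral (linepath 0 p) (\<lambda>s. F s t * G (p - s) t)"

end

theory Submission imports Defs begin

(* Parametrise the segment [0,p] as s = x p with 0 <= x <= 1, so that |s| + |p - s| = |p|.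
   Each factor obeys |F(s)| <= (||F||/M0) e^(nu |s|) / (1 + |s|^2), the exponentials multiply to
   e^(nu |p|), and what remains is, with r = |p|, the integral of 1/((1+s^2)(1+(r-s)^2)) over
   [0,r].  Partial fractions evaluate it as m0(r)/(1+r^2), and M0 is by definition the supremum
   of m0. *)

lemma kernel_partial_fractions:
  fixes u v :: real
  shows "((u + v + 2 * u) / (1 + u\<^sup>2) + (u + v + 2 * v) / (1 + v\<^sup>2)) / ((u + v)\<^sup>2 + 4)
       = (u + v) / ((1 + u\<^sup>2) * (1 + v\<^sup>2))"
proof -
  have pos: "1 + u\<^sup>2 > 0" "1 + v\<^sup>2 > 0" "(u + v)\<^sup>2 + 4 > 0"
    by (auto intro: add_pos_nonneg add_nonneg_pos)
  have "(u + v + 2 * u) * (1 + v\<^sup>2) + (u + v + 2 * v) * (1 + u\<^sup>2) = (u + v) * ((u + v)\<^sup>2 + 4)"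
    by (simp add: algebra_simps power2_eq_square)
  then show ?thesis
    using pos by (simp add: add_frac_eq mult_ac)
qed

definition conv_kernel :: "real \<Rightarrow> real \<Rightarrow> real" where
  "conv_kernel r x = r / ((1 + (x * r)\<^sup>2) * (1 + ((1 - x) * r)\<^sup>2))"

definition conv_antideriv :: "real \<Rightarrow> real \<Rightarrow> real" where
  "conv_antideriv r x =
     (r * (arctan (x * r) - arctan ((1 - x) * r)) + (ln (1 + (x * r)\<^sup>2) - ln (1 + ((1 - x) * r)\<^sup>2)))
     / (r * (r\<^sup>2 + 4))"

lemma has_real_derivative_conv_antideriv:
  fixes r :: real
  assumes "r \<noteq> 0"
  shows "(conv_antideriv r has_real_derivative conv_kernel r x) (at x)"
proof -
  have pos: "1 + (x * r)\<^sup>2 > 0" "1 + ((1 - x) * r)\<^sup>2 > 0"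
    by (auto intro: add_pos_nonneg)
  have "((\<lambda>x. r * (arctan (x * r) - arctan ((1 - x) * r))
              + (ln (1 + (x * r)\<^sup>2) - ln (1 + ((1 - x) * r)\<^sup>2)))
        has_real_derivative
          r * ((r + 2 * (x * r)) / (1 + (x * r)\<^sup>2) + (r + 2 * ((1 - x) * r)) / (1 + ((1 - x) * r)\<^sup>2)))
        (at x)"
    by (rule derivative_eq_intros refl | rule pos)+
       (simp add: inverse_eq_divide add_divide_distrib diff_divide_distrib algebra_simps)
  then have "(conv_antideriv r has_real_derivative
      r * ((r + 2 * (x * r)) / (1 + (x * r)\<^sup>2) + (r + 2 * ((1 - x) * r)) / (1 + ((1 - x) * r)\<^sup>2))
        / (r * (r\<^sup>2 + 4))) (at x)"
    unfolding conv_antideriv_def by (rule DERIV_cdivide)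
  moreover have "x * r + (1 - x) * r = r"
    by (simp add: algebra_simps)
  ultimately show ?thesis
    using kernel_partial_fractions[of "x * r" "(1 - x) * r"] assms by (simp add: conv_kernel_def)
qed

definition m0_fun :: "real \<Rightarrow> real" where
  "m0_fun s = 2 * (1 + s\<^sup>2) * (ln (1 + s\<^sup>2) + s * arctan s) / (s * (s\<^sup>2 + 4))"

lemma conv_kernel_has_integral:
  fixes r :: real
  assumes "r \<ge> 0"
  shows "(conv_kernel r has_integral m0_fun r / (1 + r\<^sup>2)) {0..1}"
proof (cases "r = 0")
  case True
  then show ?thesis
    unfolding conv_kernel_def m0_fun_def by simp
next
  case False
  have "(conv_kernel r has_integral conv_antideriv r 1 - conv_antideriv r 0) {0..1}"
    by (rule fundamental_theorem_of_calculus)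
       (auto simp: has_real_derivative_iff_has_vector_derivative[symmetric]
             intro!: has_field_derivative_at_within has_real_derivative_conv_antideriv False)
  moreover have "conv_antideriv r 1 - conv_antideriv r 0
      = 2 * (ln (1 + r\<^sup>2) + r * arctan r) / (r * (r\<^sup>2 + 4))"
    by (simp add: conv_antideriv_def add_divide_distrib diff_divide_distrib)
  moreover have "1 + r\<^sup>2 \<noteq> 0"
    by (metis add_pos_nonneg zero_le_power2 zero_less_one less_irrefl)
  then have "m0_fun r / (1 + r\<^sup>2) = 2 * (ln (1 + r\<^sup>2) + r * arctan r) / (r * (r\<^sup>2 + 4))"
    unfolding m0_fun_def by (simp only: times_divide_eq_right mult.assoc mult.left_commute) simp
  ultimately show ?thesis
    by simp
qed

lemma m0_fun_le_8:
  fixes s :: real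
  assumes "s \<ge> 0"
  shows "m0_fun s \<le> 8"
proof (cases "s = 0")
  case True
  then show ?thesis
    by (simp add: m0_fun_def)
next
  case False
  with assms have s: "s > 0"
    by simp
  have "1 + s\<^sup>2 \<le> (1 + s)\<^sup>2"
    using s by (simp add: power2_eq_square algebra_simps)
  also have "\<dots> \<le> exp s ^ 2"
    using s exp_ge_add_one_self[of s] by (intro power_mono) auto
  also have "\<dots> = exp (2 * s)"
    by (rule exp_double[symmetric])
  finally have "ln (1 + s\<^sup>2) \<le> ln (exp (2 * s))"
    by (intro ln_mono) (auto intro: add_pos_nonneg)
  moreover have "s * arctan s \<le> s * 2"
    using arctan_ubound[of s] pi_less_4 s by (intro mult_left_mono) auto
  ultimately have "ln (1 + s\<^sup>2) + s * arctan s \<le> 4 * s"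
    by simp
  then have "2 * (1 + s\<^sup>2) * (ln (1 + s\<^sup>2) + s * arctan s) \<le> 2 * (1 + s\<^sup>2) * (4 * s)"
    by (intro mult_left_mono) auto
  also have "\<dots> \<le> 8 * (s * (s\<^sup>2 + 4))"
    using s by (simp add: algebra_simps)
  finally have "2 * (1 + s\<^sup>2) * (ln (1 + s\<^sup>2) + s * arctan s) \<le> 8 * (s * (s\<^sup>2 + 4))" .
  moreover have "s * (s\<^sup>2 + 4) > 0"
    using s by (intro mult_pos_pos add_nonneg_pos) auto
  ultimately show ?thesis
    unfolding m0_fun_def by (simp add: pos_divide_le_eq)
qed

lemma m0_fun_le_M0:
  fixes s :: real
  assumes "s \<ge> 0"
  shows "m0_fun s \<le> M0"
proof -
  have "bdd_above (m0_fun ` {0..})"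
    by (rule bdd_aboveI[of _ 8]) (auto intro: m0_fun_le_8)
  then have "m0_fun s \<le> (SUP s\<in>{0..}. m0_fun s)"
    using assms by (intro cSUP_upper) simp_all
  also have "\<dots> = M0"
    unfolding M0_def m0_fun_def ..
  finally show ?thesis .
qed

lemma M0_pos: "M0 > 0"
proof -
  have "ln (1 + (1::real)\<^sup>2) > 0" "arctan (1::real) > 0"
    by (simp_all add: ln_gt_zero arctan_one)
  then have "m0_fun 1 > 0"
    unfolding m0_fun_def by (intro divide_pos_pos mult_pos_pos add_pos_pos) simp_all
  then show ?thesis
    using m0_fun_le_M0[of 1] by linarith
qed

lemma zero_in_closure_sector:
  assumes "\<phi> > 0"
  shows "0 \<in> closure (sector \<phi>)"
  unfolding closure_approachable
proof (intro allI impI)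
  fix e :: real
  assume "e > 0"
  define d where "d = e / 2"
  with assms \<open>e > 0\<close> have "complex_of_real d \<in> sector \<phi>" "dist (complex_of_real d) 0 < e"
    by (auto simp: sector_def)
  then show "\<exists>y\<in>sector \<phi>. dist y 0 < e"
    by blast
qed

lemma of_real_mult_in_closure_sector:
  assumes "\<phi> > 0" "p \<in> closure (sector \<phi>)" "c \<ge> 0"
  shows "complex_of_real c * p \<in> closure (sector \<phi>)"
proof (cases "c = 0")
  case True
  then show ?thesis
    using zero_in_closure_sector[OF assms(1)] by simp
next
  case False
  with assms(3) have "scaleR c ` sector \<phi> \<subseteq> sector \<phi>"
    by (auto simp: sector_def scaleR_conv_of_real)
  then have "closure (scaleR c ` sector \<phi>) \<subseteq> closure (sector \<phi>)"
    by (rule closure_mono)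
  moreover have "c *\<^sub>R p \<in> closure (scaleR c ` sector \<phi>)"
    unfolding closure_scaleR[symmetric] using assms(2) by blast
  ultimately show ?thesis
    by (auto simp: scaleR_conv_of_real)
qed

lemma weighted_norm_le_wnorm:
  assumes "F \<in> Aspace \<phi> T \<nu>" "s \<in> closure (sector \<phi>)" "t \<in> {0..T}"
  shows "M0 * ((1 + (cmod s)\<^sup>2) * exp (- \<nu> * cmod s) * cmod (F s t)) \<le> wnorm \<phi> T \<nu> F"
  unfolding wnorm_def
proof (rule mult_left_mono)
  show "(1 + (cmod s)\<^sup>2) * exp (- \<nu> * cmod s) * cmod (F s t)
    \<le> (SUP pt\<in>closure (sector \<phi>) \<times> {0..T}.
          (1 + (cmod (fst pt))\<^sup>2) * exp (- \<nu> * cmod (fst pt)) * cmod (F (fst pt) (snd pt)))"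
    using assms by (intro cSUP_upper2[of _ _ "(s, t)"]) (auto simp: Aspace_def)
qed (use M0_pos in simp)

lemma Aspace_norm_le:
  assumes "F \<in> Aspace \<phi> T \<nu>" "s \<in> closure (sector \<phi>)" "t \<in> {0..T}"
  shows "cmod (F s t) \<le> wnorm \<phi> T \<nu> F / M0 * exp (\<nu> * cmod s) / (1 + (cmod s)\<^sup>2)"
proof -
  have den: "M0 * (1 + (cmod s)\<^sup>2) > 0"
    using M0_pos by (intro mult_pos_pos add_pos_nonneg) auto
  have "cmod (F s t) * (M0 * (1 + (cmod s)\<^sup>2))
      = M0 * ((1 + (cmod s)\<^sup>2) * exp (- \<nu> * cmod s) * cmod (F s t)) * exp (\<nu> * cmod s)"
    by (simp add: exp_minus field_simps)
  also have "\<dots> \<le> wnorm \<phi> T \<nu> F * exp (\<nu> * cmod s)"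
    using weighted_norm_le_wnorm[OF assms] by (rule mult_right_mono) simp
  finally have "cmod (F s t) \<le> wnorm \<phi> T \<nu> F * exp (\<nu> * cmod s) / (M0 * (1 + (cmod s)\<^sup>2))"
    by (simp only: pos_le_divide_eq[OF den])
  then show ?thesis
    by simp
qed

lemma wnorm_nonneg:
  assumes "F \<in> Aspace \<phi> T \<nu>" "\<phi> > 0" "T \<ge> 0"
  shows "wnorm \<phi> T \<nu> F \<ge> 0"
proof -
  have "0 \<le> M0 * ((1 + (cmod 0)\<^sup>2) * exp (- \<nu> * cmod 0) * cmod (F 0 0))"
    using M0_pos by simp
  also have "\<dots> \<le> wnorm \<phi> T \<nu> F"
    using assms by (intro weighted_norm_le_wnorm zero_in_closure_sector) auto
  finally show ?thesis .
qed

lemma norm_contour_integral_linepath_le: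
  assumes "\<And>x. x \<in> {0..1} \<Longrightarrow> norm (g (linepath a b x)) * norm (b - a) \<le> k x"
    and "(k has_integral K) {0..1}"
  shows "norm (contour_integral (linepath a b) g) \<le> K"
proof (cases "g contour_integrable_on linepath a b")
  case True
  then have g: "((\<lambda>x. g (linepath a b x) * (b - a)) has_integral contour_integral (linepath a b) g)
                 {0..1}"
    using has_contour_integral_integral has_contour_integral_linepath by blast
  have "norm (integral {0..1} (\<lambda>x. g (linepath a b x) * (b - a))) \<le> integral {0..1} k"
    using assms g by (intro integral_norm_bound_integral) (auto simp: has_integral_integrable norm_mult)
  then show ?thesis
    unfolding integral_unique[OF g] integral_unique[OF assms(2)] .
next
  case False
  have "K \<ge> 0"
    using assms by (intro has_integral_nonneg[OF assms(2)])
      (meson norm_ge_zero mult_nonneg_nonneg order_trans)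
  with False show ?thesis
    by (simp add: not_integrable_contour_integral)
qed

lemma norm_conv_le:
  fixes F G :: "complex \<Rightarrow> real \<Rightarrow> complex" and A B \<nu> :: real
  assumes "\<phi> > 0" "p \<in> closure (sector \<phi>)"
    and F_le: "\<And>s. s \<in> closure (sector \<phi>) \<Longrightarrow>
                  cmod (F s t) \<le> A * exp (\<nu> * cmod s) / (1 + (cmod s)\<^sup>2)"
    and G_le: "\<And>s. s \<in> closure (sector \<phi>) \<Longrightarrow>
                  cmod (G s t) \<le> B * exp (\<nu> * cmod s) / (1 + (cmod s)\<^sup>2)"
  shows "cmod (conv (\<lambda>s t. s ^ j * F s t) G p t)
         \<le> cmod p ^ j * exp (\<nu> * cmod p) * A * B * (m0_fun (cmod p) / (1 + (cmod p)\<^sup>2))"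
proof -
  define r where "r = cmod p"
  have r: "r \<ge> 0"
    by (simp add: r_def)
  have "cmod (contour_integral (linepath 0 p) (\<lambda>s. s ^ j * F s t * G (p - s) t))
        \<le> r ^ j * exp (\<nu> * r) * A * B * (m0_fun r / (1 + r\<^sup>2))"
  proof (rule norm_contour_integral_linepath_le)
    show "((\<lambda>x. r ^ j * exp (\<nu> * r) * A * B * conv_kernel r x)
           has_integral r ^ j * exp (\<nu> * r) * A * B * (m0_fun r / (1 + r\<^sup>2))) {0..1}"
      using r by (intro has_integral_mult_right conv_kernel_has_integral)
  next
    fix x :: real
    assume x: "x \<in> {0..1}"
    define s where "s = complex_of_real x * p"
    have lp: "linepath 0 p x = s"
      by (simp add: s_def linepath_def scaleR_conv_of_real)
    have ps: "p - s = complex_of_real (1 - x) * p"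
      by (simp add: s_def algebra_simps)
    have ns: "cmod s = x * r"
      using x by (simp add: s_def r_def norm_mult)
    have nps: "cmod (p - s) = (1 - x) * r"
      unfolding ps norm_mult norm_of_real using x by (simp add: r_def)
    have "s \<in> closure (sector \<phi>)"
      unfolding s_def using x by (intro of_real_mult_in_closure_sector assms(1,2)) simp
    from F_le[OF this] have Fs: "cmod (F s t) \<le> A * exp (\<nu> * (x * r)) / (1 + (x * r)\<^sup>2)"
      unfolding ns .
    have "p - s \<in> closure (sector \<phi>)"
      unfolding ps using x by (intro of_real_mult_in_closure_sector assms(1,2)) simp
    from G_le[OF this]
    have Gs: "cmod (G (p - s) t) \<le> B * exp (\<nu> * ((1 - x) * r)) / (1 + ((1 - x) * r)\<^sup>2)"
      unfolding nps .
    have exps: "exp (\<nu> * (x * r)) * exp (\<nu> * ((1 - x) * r)) = exp (\<nu> * r)"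
      by (simp add: exp_add[symmetric] algebra_simps)
    have "norm (s ^ j * F s t * G (p - s) t) * norm (p - 0)
        = (x * r) ^ j * cmod (F s t) * cmod (G (p - s) t) * r"
      by (simp add: norm_mult norm_power ns r_def)
    also have "\<dots> \<le> r ^ j * (A * exp (\<nu> * (x * r)) / (1 + (x * r)\<^sup>2))
                       * (B * exp (\<nu> * ((1 - x) * r)) / (1 + ((1 - x) * r)\<^sup>2)) * r"
      using x r Fs Gs order_trans[OF norm_ge_zero Fs] order_trans[OF norm_ge_zero Gs]
      by (intro mult_right_mono mult_mono power_mono mult_nonneg_nonneg zero_le_power)
         (auto simp: mult_left_le_one_le)
    also have "\<dots> = r ^ j * exp (\<nu> * r) * A * B * conv_kernel r x"
      unfolding exps[symmetric] conv_kernel_def by (simp add: mult_ac)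
    finally show "norm (linepath 0 p x ^ j * F (linepath 0 p x) t * G (p - linepath 0 p x) t)
                  * norm (p - 0) \<le> \<dots>"
      unfolding lp .
  qed
  then show ?thesis
    by (simp add: conv_def r_def)
qed

theorem lemma11:
  fixes \<phi> \<nu> T :: real and F G :: "complex \<Rightarrow> real \<Rightarrow> complex" and j :: nat
    and p :: complex and t :: real
  assumes "T > 0" and "0 < \<phi>" and "\<phi> < pi / 6" and "\<nu> > 0"
    and "F \<in> Aspace \<phi> T \<nu>" and "G \<in> Aspace \<phi> T \<nu>"
    and "p \<in> closure (sector \<phi>)" and "t \<in> {0..T}"
  shows "cmod (conv (\<lambda>s t. s ^ j * F s t) G p t)
         \<le> cmod p ^ j * exp (\<nu> * cmod p) / (M0 * (1 + (cmod p)^2)) * wnorm \<phi> T \<nu> F * wnorm \<phi> T \<nu> G"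
proof -
  let ?r = "cmod p" and ?nF = "wnorm \<phi> T \<nu> F" and ?nG = "wnorm \<phi> T \<nu> G"
  have "cmod (conv (\<lambda>s t. s ^ j * F s t) G p t)
        \<le> ?r ^ j * exp (\<nu> * ?r) * (?nF / M0) * (?nG / M0) * (m0_fun ?r / (1 + ?r\<^sup>2))"
    using assms(2,7) by (rule norm_conv_le) (use Aspace_norm_le assms(5,6,8) in auto)
  also have "\<dots> \<le> ?r ^ j * exp (\<nu> * ?r) * (?nF / M0) * (?nG / M0) * (M0 / (1 + ?r\<^sup>2))"
    using assms M0_pos wnorm_nonneg[OF assms(5)] wnorm_nonneg[OF assms(6)]
    by (intro mult_left_mono divide_right_mono m0_fun_le_M0) auto
  also have "\<dots> = ?r ^ j * exp (\<nu> * ?r) / (M0 * (1 + ?r\<^sup>2)) * ?nF * ?nG"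
  proof -
    have "a * (b / M) * (c / M) * (M / d) = a / (M * d) * b * c" if "M \<noteq> 0" "d \<noteq> 0"
      for a b c d M :: real
      using that by (simp add: field_simps)
    moreover have "1 + ?r\<^sup>2 \<noteq> 0"
      by (metis add_pos_nonneg zero_le_power2 zero_less_one less_irrefl)
    ultimately show ?thesis
      using M0_pos by simp
  qed
  finally show ?thesis .
qed

end
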